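(* For a positive integer $d$ let $p(d)=\frac{3}{16}(d-1)d^2\prod_{q\mid d}\bigl(1-\frac{1}{q^2}\bigr)$ (product over prime divisors $q$ of $d$), and for $n\ge1$ let $a_n=\sum_{d\mid n}\sigma_1\bigl(\frac{n}{d}\bigr)p(d)$. Then for every $n\geq1$, \[ a_n=\frac{3}{16}\bigl[\sigma_3(n)-n\sigma_1(n)\bigr]. \]
   Context: $\sigma_\ell(m)=\sum_{d\mid m}d^\ell$ for positive integers $m$. (For odd $n$, $p(n)$ is the number of primitive type A square-tiled surfaces with $n$ squares in $\mathcal{H}(2)$ and $a_n$ the number of all type A ones; for even $n$ the quantities are defined by these formulas.) *)

theory Defs
  imports Complex_Main "HOL-Computational_Algebra.Primes"
begin

definition sigma :: "nat \<Rightarrow> nat \<Rightarrow> nat" where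
  "sigma l m = (\<Sum>d | d dvd m. d ^ l)"

definition pcount :: "nat \<Rightarrow> real" where
  "pcount d = 3/16 * (real d - 1) * (real d)^2 *
     (\<Prod>q\<in>prime_factors d. (1 - 1 / (real q)^2))"

definition acount :: "nat \<Rightarrow> real" where
  "acount n = (\<Sum>d | d dvd n. real (sigma 1 (n div d)) * pcount d)"

end

theory Submission
  imports Defs
begin

(*
  Write J_2 for Jordan's totient, so that p(d) = 3/16 (d - 1) J_2(d). J_2 is multiplicative and
  its divisor sums telescope on prime powers, whence sum_{d | m} J_2(d) = m^2. Since
  sigma_1 = 1 * id as a Dirichlet convolution, the two halves of a_n are
  (1 * id * (id J_2))(n) and (1 * id * J_2)(n). Regrouping, id * (id J_2) = id^3 gives
  sigma_3(n) for the first; 1 * J_2 = id^2 gives (id * id^2)(n) = n sigma_1(n) for the second.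
*)

lemma nat_prime_power_coprime_induct [consumes 1, case_names one prime_power_times]:
  fixes n :: nat
  assumes "n > 0"
    and one: "P 1"
    and prime_power_times: "\<And>p k m. prime p \<Longrightarrow> k > 0 \<Longrightarrow> \<not> p dvd m \<Longrightarrow> P m \<Longrightarrow> P (p ^ k * m)"
  shows "P n"
  using \<open>n > 0\<close>
proof (induction n rule: less_induct)
  case (less n)
  show ?case
  proof (cases "n = 1")
    case True
    then show ?thesis using one by simp
  next
    case False
    then obtain p where p: "prime p" "p dvd n"
      using less.prems prime_factor_nat by blast
    define k where "k = multiplicity p n"
    obtain m where n: "n = p ^ k * m" and m: "\<not> p dvd m"
      unfolding k_def using less.prems p(1) not_prime_unit by (metis multiplicity_decompose' not_gr0)
    have k: "k > 0"
      using p less.prems by (simp add: k_def prime_multiplicity_gt_zero_iff)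
    have "m > 0"
      using m by (auto intro!: gr0I)
    have "1 < p ^ k"
      using k prime_gt_1_nat[OF p(1)] by (metis one_less_power)
    with \<open>m > 0\<close> have "m < n"
      unfolding n by simp
    then show ?thesis
      using prime_power_times[OF p(1) k m] less.IH \<open>m > 0\<close> n by simp
  qed
qed

lemma sum_divisors_coprime_mult:
  fixes f :: "nat \<Rightarrow> 'a::comm_monoid_add"
  assumes "coprime a b" "a > 0" "b > 0"
  shows "(\<Sum>d | d dvd a * b. f d) = (\<Sum>x | x dvd a. \<Sum>y | y dvd b. f (x * y))"
proof -
  let ?D = "{x. x dvd a} \<times> {y. y dvd b}"
  have "inj_on (\<lambda>(x, y). x * y) ?D"
  proof (rule inj_onI, clarsimp)
    fix x y x' y'
    assume dvd: "x dvd a" "y dvd b" "x' dvd a" "y' dvd b" and eq: "x * y = x' * y'"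
    have "coprime x y'" "coprime x' y"
      using assms(1) dvd by (auto intro: coprime_divisors)
    then have "x dvd x'" "x' dvd x"
      using eq by (metis coprime_dvd_mult_left_iff dvd_triv_left)+
    then have "x = x'"
      by (rule dvd_antisym)
    moreover have "x > 0"
      using dvd(1) assms(2) by (auto intro!: gr0I)
    ultimately show "x = x' \<and> y = y'"
      using eq by simp
  qed
  moreover have "(\<lambda>(x, y). x * y) ` ?D = {d. d dvd a * b}"
    by (auto intro: mult_dvd_mono dest: division_decomp)
  ultimately have "(\<Sum>d | d dvd a * b. f d) = (\<Sum>(x, y)\<in>?D. f (x * y))"
    by (metis (no_types, lifting) case_prod_beta sum.reindex_cong)
  also have "\<dots> = (\<Sum>x | x dvd a. \<Sum>y | y dvd b. f (x * y))"
    by (simp add: sum.cartesian_product)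
  finally show ?thesis .
qed

lemma sum_divisors_multiplicative:
  fixes f :: "nat \<Rightarrow> 'a::comm_semiring_0"
  assumes "coprime a b" "a > 0" "b > 0"
    and mult: "\<And>x y. coprime x y \<Longrightarrow> f (x * y) = f x * f y"
  shows "(\<Sum>d | d dvd a * b. f d) = (\<Sum>d | d dvd a. f d) * (\<Sum>d | d dvd b. f d)"
proof -
  have "(\<Sum>d | d dvd a * b. f d) = (\<Sum>x | x dvd a. \<Sum>y | y dvd b. f x * f y)"
    unfolding sum_divisors_coprime_mult[OF assms(1-3)]
    using assms(1) by (intro sum.cong refl mult) (auto intro: coprime_divisors)
  then show ?thesis
    by (simp add: sum_product)
qed

lemma sum_divisors_prime_power:
  fixes f :: "nat \<Rightarrow> 'a::comm_monoid_add"
  assumes "prime p"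
  shows "(\<Sum>d | d dvd p ^ k. f d) = (\<Sum>i\<le>k. f (p ^ i))"
proof -
  have "{d. d dvd p ^ k} = (\<lambda>i. p ^ i) ` {..k}"
    using divides_primepow_nat[OF assms] by auto
  moreover have "inj_on (\<lambda>i. p ^ i) {..k}"
    using prime_gt_1_nat[OF assms] by (simp add: inj_on_def)
  ultimately show ?thesis
    by (simp add: sum.reindex)
qed

lemma sum_divisors_nested_eq_sum_pairs:
  fixes F :: "nat \<Rightarrow> nat \<Rightarrow> 'a::comm_monoid_add"
  assumes "n > 0"
  shows "(\<Sum>d | d dvd n. \<Sum>e | e dvd n div d. F d e) = (\<Sum>(d, e)\<in>{(d, e). d * e dvd n}. F d e)"
proof -
  have "(SIGMA d:{d. d dvd n}. {e. e dvd n div d}) = {(d, e). d * e dvd n}"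
    using assms by (auto simp: dvd_div_iff_mult mult.commute intro: dvd_mult_left)
  moreover have "finite {d. d dvd n}" "\<forall>d\<in>{d. d dvd n}. finite {e. e dvd n div d}"
    using assms by (auto simp: dvd_div_eq_0_iff)
  ultimately show ?thesis
    by (simp add: sum.Sigma)
qed

lemma sum_divisors_nested_swap:
  fixes F :: "nat \<Rightarrow> nat \<Rightarrow> 'a::comm_monoid_add"
  assumes "n > 0"
  shows "(\<Sum>d | d dvd n. \<Sum>e | e dvd n div d. F d e) = (\<Sum>e | e dvd n. \<Sum>d | d dvd n div e. F d e)"
proof -
  have "(\<Sum>(d, e)\<in>{(d, e). d * e dvd n}. F d e) = (\<Sum>(e, d)\<in>{(e, d). e * d dvd n}. F d e)"
    by (rule sum.reindex_bij_witness[of _ prod.swap prod.swap]) (auto simp: mult.commute)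
  then show ?thesis
    using assms by (simp add: sum_divisors_nested_eq_sum_pairs)
qed

lemma sum_divisors_nested_regroup:
  fixes F :: "nat \<Rightarrow> nat \<Rightarrow> 'a::comm_monoid_add"
  assumes "n > 0"
  shows "(\<Sum>d | d dvd n. \<Sum>e | e dvd n div d. F d e) = (\<Sum>k | k dvd n. \<Sum>d | d dvd k. F d (k div d))"
proof -
  have "finite {k. k dvd n}" "\<forall>k\<in>{k. k dvd n}. finite {d. d dvd k}"
    using assms by (auto intro: finite_divisors_nat)
  then have "(\<Sum>k | k dvd n. \<Sum>d | d dvd k. F d (k div d))
      = (\<Sum>(k, d)\<in>(SIGMA k:{k. k dvd n}. {d. d dvd k}). F d (k div d))"
    by (simp add: sum.Sigma)
  also have "\<dots> = (\<Sum>(d, e)\<in>{(d, e). d * e dvd n}. F d e)"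
    by (rule sum.reindex_bij_witness[of _ "\<lambda>(d, e). (d * e, d)" "\<lambda>(k, d). (d, k div d)"])
       (use assms in \<open>auto intro: dvd_trans\<close>)
  finally show ?thesis
    using assms by (simp add: sum_divisors_nested_eq_sum_pairs)
qed

lemma sum_divisors_complement:
  fixes f :: "nat \<Rightarrow> 'a::comm_monoid_add"
  assumes "n > 0"
  shows "(\<Sum>e | e dvd n. f (n div e)) = (\<Sum>e | e dvd n. f e)"
  by (rule sum.reindex_bij_witness[of _ "\<lambda>e. n div e" "\<lambda>e. n div e"])
     (use assms in \<open>auto simp: div_div_eq_right dvd_mult_div_cancel\<close>)

definition jordan2 :: "nat \<Rightarrow> real" where
  "jordan2 d = real d ^ 2 * (\<Prod>q\<in>prime_factors d. 1 - 1 / real q ^ 2)"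

lemma jordan2_mult_coprime:
  assumes "coprime a b"
  shows "jordan2 (a * b) = jordan2 a * jordan2 b"
proof (cases "a = 0 \<or> b = 0")
  case True
  then show ?thesis
    using assms by (auto simp: jordan2_def)
next
  case False
  then have "prime_factors a \<inter> prime_factors b = {}"
    using assms prime_factors_gcd[of a b] by (simp add: coprime_iff_gcd_eq_1)
  moreover have "prime_factors (a * b) = prime_factors a \<union> prime_factors b"
    using False by (simp add: prime_factors_product)
  ultimately show ?thesis
    unfolding jordan2_def by (simp add: prod.union_disjoint power_mult_distrib)
qed

lemma jordan2_prime_power:
  assumes "prime p"
  shows "jordan2 (p ^ Suc k) = real p ^ (2 * k) * (real p ^ 2 - 1)"
proof -
  have "prime_factors (p ^ Suc k) = {p}"
    using assms by (simp only: prime_factorization_prime_power) simp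
  moreover have "real p \<noteq> 0"
    using assms by (simp add: prime_gt_0_nat)
  moreover have "real (p ^ Suc k) ^ 2 = real p ^ (2 * k) * real p ^ 2"
    by (simp add: power_mult_distrib power_mult power2_eq_square)
  ultimately show ?thesis
    unfolding jordan2_def by (simp add: field_simps)
qed

lemma sum_divisors_jordan2_prime_power:
  assumes "prime p"
  shows "(\<Sum>d | d dvd p ^ k. jordan2 d) = real p ^ (2 * k)"
  unfolding sum_divisors_prime_power[OF assms]
proof (induction k)
  case 0
  show ?case by (simp add: jordan2_def)
next
  case (Suc k)
  then show ?case
    using jordan2_prime_power[OF assms, of k] by (simp add: algebra_simps power_add power2_eq_square)
qed

lemma sum_divisors_jordan2:
  assumes "m > 0"
  shows "(\<Sum>d | d dvd m. jordan2 d) = real m ^ 2"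
  using assms
proof (induction m rule: nat_prime_power_coprime_induct)
  case one
  show ?case by (simp add: jordan2_def)
next
  case (prime_power_times p k m)
  have "coprime (p ^ k) m"
    using prime_power_times by (simp add: prime_imp_coprime)
  moreover have "p ^ k > 0" "m > 0"
    using prime_power_times by (auto simp: prime_gt_0_nat intro!: gr0I)
  ultimately have "(\<Sum>d | d dvd p ^ k * m. jordan2 d)
      = (\<Sum>d | d dvd p ^ k. jordan2 d) * (\<Sum>d | d dvd m. jordan2 d)"
    by (intro sum_divisors_multiplicative jordan2_mult_coprime)
  then show ?case
    using prime_power_times by (simp add: sum_divisors_jordan2_prime_power power_mult_distrib power_even_eq)
qed

lemma pcount_eq_jordan2: "pcount d = 3/16 * (real d - 1) * jordan2 d"
  by (simp add: pcount_def jordan2_def)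

lemma of_nat_sigma: "real (sigma l m) = (\<Sum>d | d dvd m. real d ^ l)"
  by (simp add: sigma_def)

lemma sum_sigma1_convolution_id_jordan2:
  assumes "n > 0"
  shows "(\<Sum>d | d dvd n. real (sigma 1 (n div d)) * (real d * jordan2 d)) = real (sigma 3 n)"
proof -
  have "(\<Sum>d | d dvd n. real (sigma 1 (n div d)) * (real d * jordan2 d))
      = (\<Sum>d | d dvd n. \<Sum>e | e dvd n div d. real e * (real d * jordan2 d))"
    by (simp add: of_nat_sigma sum_distrib_right)
  also have "\<dots> = (\<Sum>k | k dvd n. \<Sum>d | d dvd k. real (k div d) * real d * jordan2 d)"
    using assms by (simp add: sum_divisors_nested_regroup mult.assoc)
  also have "\<dots> = (\<Sum>k | k dvd n. real k * (\<Sum>d | d dvd k. jordan2 d))"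
    unfolding sum_distrib_left by (intro sum.cong refl) (auto simp flip: of_nat_mult)
  also have "\<dots> = (\<Sum>k | k dvd n. real k ^ 3)"
    using assms by (intro sum.cong refl) (auto simp: sum_divisors_jordan2 power_numeral_reduce intro!: gr0I)
  finally show ?thesis
    by (simp add: of_nat_sigma)
qed

lemma sum_sigma1_convolution_jordan2:
  assumes "n > 0"
  shows "(\<Sum>d | d dvd n. real (sigma 1 (n div d)) * jordan2 d) = real n * real (sigma 1 n)"
proof -
  have "(\<Sum>d | d dvd n. real (sigma 1 (n div d)) * jordan2 d)
      = (\<Sum>d | d dvd n. \<Sum>e | e dvd n div d. real e * jordan2 d)"
    by (simp add: of_nat_sigma sum_distrib_right)
  also have "\<dots> = (\<Sum>e | e dvd n. real e * (\<Sum>d | d dvd n div e. jordan2 d))"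
    by (subst sum_divisors_nested_swap[OF assms]) (simp add: sum_distrib_left)
  also have "\<dots> = (\<Sum>e | e dvd n. real n * real (n div e))"
  proof (intro sum.cong refl)
    fix e
    assume "e \<in> {e. e dvd n}"
    then have "n div e > 0" "real e * real (n div e) = real n"
      using assms by (auto simp: dvd_div_eq_0_iff simp flip: of_nat_mult)
    then show "real e * (\<Sum>d | d dvd n div e. jordan2 d) = real n * real (n div e)"
      by (simp add: sum_divisors_jordan2 power2_eq_square mult.assoc[symmetric])
  qed
  also have "\<dots> = real n * real (sigma 1 n)"
    using assms by (simp add: of_nat_sigma sum_divisors_complement flip: sum_distrib_left)
  finally show ?thesis .
qed

theorem mainTheorem6:
  fixes n :: nat
  assumes "n \<ge> 1"
  shows "acount n = 3/16 * (real (sigma 3 n) - real n * real (sigma 1 n))"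
proof -
  have "n > 0"
    using assms by simp
  have "acount n = 3/16 * (\<Sum>d | d dvd n.
      real (sigma 1 (n div d)) * (real d * jordan2 d) - real (sigma 1 (n div d)) * jordan2 d)"
    unfolding acount_def pcount_eq_jordan2 sum_distrib_left
    by (intro sum.cong refl) (simp add: right_diff_distrib mult_ac)
  then show ?thesis
    unfolding sum_subtractf sum_sigma1_convolution_id_jordan2[OF \<open>n > 0\<close>]
      sum_sigma1_convolution_jordan2[OF \<open>n > 0\<close>] .
qed

end
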